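(* In the setting described in the context, suppose Method 1 does not stop, and let $(x^k)_{k\in\mathbb N}$ be the generated sequence (with associated $(\bar x^k)$, $(\alpha_k)$). Then: (i) $(x^k)$ is Fejér convergent to $\operatorname{zer}(A+B)$, i.e. for every $x\in\operatorname{zer}(A+B)$, $\|x^{k+1}-x\|\le\|x^k-x\|$ for all $k$ sufficiently large; (ii) $(x^k)$ is bounded; (iii) $\lim_{k\to\infty}\Big(\langle x^k-\bar x^k-\alpha_k(A_2x^k-A_2\bar x^k),\,x^k-\bar x^k\rangle-\bar\delta\|x^k-\bar x^k\|^2\Big)=0$.
   Context: Let $\mathcal H$ be a real Hilbert space with inner product $\langle\cdot,\cdot\rangle$ and norm $\|\cdot\|$. Let $A_1:\mathcal H\to\mathcal H$ be $\beta$-cocoercive for some $\beta>0$ (i.e. $\langle A_1x-A_1y,x-y\rangle\ge\beta\|A_1x-A_1y\|^2$ for all $x,y$), let $A_2:\mathcal H\to\mathcal H$ be maximally monotone and uniformly continuous, let $B:\mathcal H\rightrightarrows\mathcal H$ be maximally monotone, and set $A:=A_1+A_2$. Assume $\operatorname{zer}(A+B):=\{x:0\in Ax+Bx\}\neq\emptyset$. $J_{\alpha B}:=(I+\alpha B)^{-1}$ for $\alpha>0$, and $P_C$ denotes the orthogonal projection onto a nonempty closed convex set $C$. Fix $\theta,\delta\in(0,1)$, $\bar\delta>0$ with $1-\delta-\bar\delta>0$, and $\alpha_{-1}>0$ with $\alpha_{-1}\le4\beta\bar\delta$. Conceptual Algorithm: pick $x^0\in\mathcal H$. Given $x^k$ and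 $\alpha_{k-1}$, for $j\in\mathbb N$ let $\bar x^k_j:=J_{\alpha_{k-1}\theta^jB}(x^k-\alpha_{k-1}\theta^jAx^k)$ and let $j(k)$ be the smallest $j\in\mathbb N$ with $\alpha_{k-1}\theta^j\langle A_2x^k-A_2\bar x^k_j,x^k-\bar x^k_j\rangle\le\delta\|x^k-\bar x^k_j\|^2$. Set $\alpha_k:=\alpha_{k-1}\theta^{j(k)}$, $\bar x^k:=J_{\alpha_kB}(x^k-\alpha_kAx^k)$, $r_k:=\frac{\bar\delta}{\alpha_k}\|x^k-\bar x^k\|^2$ and $T_k:=\{x\in\mathcal H:\langle \frac{x^k-\bar x^k}{\alpha_k}-(A_2x^k-A_2\bar x^k),x-\bar x^k\rangle\le r_k\}$. Method 1 sets $x^{k+1}:=P_{T_k}(x^k)$ and stops if $x^{k+1}=x^k$. *)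

theory Defs
  imports "HOL-Analysis.Analysis"
begin

definition monotone_op :: "('a::real_inner \<Rightarrow> 'a set) \<Rightarrow> bool" where
  "monotone_op B \<longleftrightarrow>
     (\<forall>x y u v. u \<in> B x \<longrightarrow> v \<in> B y \<longrightarrow> inner (x - y) (u - v) \<ge> 0)"

definition maximal_monotone :: "('a::real_inner \<Rightarrow> 'a set) \<Rightarrow> bool" where
  "maximal_monotone B \<longleftrightarrow> monotone_op B \<and>
     (\<forall>x u. (\<forall>y v. v \<in> B y \<longrightarrow> inner (x - y) (u - v) \<ge> 0) \<longrightarrow> u \<in> B x)"

definition cocoercive :: "real \<Rightarrow> ('a::real_inner \<Rightarrow> 'a) \<Rightarrow> bool" where
  "cocoercive \<beta> T \<longleftrightarrow>
     (\<forall>x y. inner (T x - T y) (x - y) \<ge> \<beta> * (norm (T x - T y))\<^sup>2)"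

text \<open>Resolvent J_{\<alpha>B} = (I + \<alpha>B)^{-1}: the unique p with z \<in> p + \<alpha> B p
  (single-valued and everywhere defined for maximally monotone B, \<alpha> > 0).\<close>
definition resolvent :: "real \<Rightarrow> ('a::real_inner \<Rightarrow> 'a set) \<Rightarrow> 'a \<Rightarrow> 'a" where
  "resolvent \<alpha> B z = (THE p. \<exists>u \<in> B p. z = p + \<alpha> *\<^sub>R u)"

definition proj :: "'a::real_inner set \<Rightarrow> 'a \<Rightarrow> 'a" where
  "proj C x = (THE p. p \<in> C \<and> (\<forall>y \<in> C. norm (x - p) \<le> norm (x - y)))"

definition zer_sum :: "('a::real_vector \<Rightarrow> 'a) \<Rightarrow> ('a \<Rightarrow> 'a set) \<Rightarrow> 'a set" where
  "zer_sum A B = {x. \<exists>u \<in> B x. A x + u = 0}"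

end

(*
  Every zero z of A + B lies in the halfspace T_k: with w_k the normal vector of T_k,
  monotonicity of B and A2, cocoercivity of A1 and the bound alpha_k <= 4 beta deltabar
  give <w_k, z - xbar_k> <= r_k. Projecting x_k onto a halfspace containing z is therefore
  strictly Fejer, |x_(k+1) - z|^2 + |x_(k+1) - x_k|^2 <= |x_k - z|^2, which gives (i), (ii)
  and |x_(k+1) - x_k| -> 0.

  Since the method does not stop, x_k lies outside T_k and |x_(k+1) - x_k| is its distance
  to the bounding hyperplane, so the quantity in (iii) equals
  |x_k - xbar_k - alpha_k (A2 x_k - A2 xbar_k)| |x_(k+1) - x_k|. The line search bounds it
  below by (1 - delta - deltabar) |x_k - xbar_k|^2, and as a uniformly continuous map grows
  at most affinely it is bounded above by an affine function of |x_k - xbar_k| times the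
  step. Hence |x_k - xbar_k| stays bounded and the quantity tends to 0.

  That xbar_k is well defined is Minty's theorem (I + alpha B is onto), proved from a
  Debrunner-Flor type argument for finite monotone sets and a minimal-norm substitute for
  weak compactness.
*)

theory Submission
  imports Defs
begin

section \<open>Finite monotone sets\<close>

lemma monotone_weighted_inner_le:
  fixes y v :: "'i \<Rightarrow> 'a::real_inner"
  assumes "finite I" and u: "\<And>i. i \<in> I \<Longrightarrow> 0 \<le> u i" "sum u I = 1"
    and mono: "\<And>i j. i \<in> I \<Longrightarrow> j \<in> I \<Longrightarrow> 0 \<le> inner (y i - y j) (v i - v j)"
  shows "inner (\<Sum>i\<in>I. u i *\<^sub>R y i) (\<Sum>i\<in>I. u i *\<^sub>R v i) \<le> (\<Sum>i\<in>I. u i * inner (y i) (v i))"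
proof -
  define S where "S = (\<Sum>i\<in>I. u i * inner (y i) (v i))"
  define M where "M = inner (\<Sum>i\<in>I. u i *\<^sub>R y i) (\<Sum>i\<in>I. u i *\<^sub>R v i)"
  have diag: "(\<Sum>i\<in>I. \<Sum>j\<in>I. u i * u j * inner (y i) (v i)) = S"
    by (simp add: S_def sum_distrib_left[symmetric] sum_distrib_right[symmetric] u(2)
        mult.commute mult.left_commute)
  have diag': "(\<Sum>i\<in>I. \<Sum>j\<in>I. u i * u j * inner (y j) (v j)) = S"
    by (simp add: S_def sum_distrib_left[symmetric] mult.assoc sum_distrib_right[symmetric] u(2))
  have cross: "(\<Sum>i\<in>I. \<Sum>j\<in>I. u i * u j * inner (y i) (v j)) = M"
    by (subst sum.swap)
      (simp add: M_def inner_sum_left inner_sum_right sum_distrib_left mult.assoc mult.left_commute)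
  have cross': "(\<Sum>i\<in>I. \<Sum>j\<in>I. u i * u j * inner (y j) (v i)) = M"
    by (simp add: M_def inner_sum_left inner_sum_right sum_distrib_left mult.assoc mult.left_commute)
  have "0 \<le> (\<Sum>i\<in>I. \<Sum>j\<in>I. u i * u j * inner (y i - y j) (v i - v j))"
    using mono u(1) by (intro sum_nonneg mult_nonneg_nonneg) auto
  also have "\<dots> = (\<Sum>i\<in>I. \<Sum>j\<in>I. u i * u j * inner (y i) (v i) + u i * u j * inner (y j) (v j)
      - u i * u j * inner (y i) (v j) - u i * u j * inner (y j) (v i))"
    by (simp add: inner_diff_left inner_diff_right algebra_simps)
  also have "\<dots> = 2 * S - 2 * M"
    by (simp add: sum.distrib sum_subtractf diag diag' cross cross')
  finally show ?thesis
    by (simp add: S_def M_def)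
qed

definition lift_pair :: "'a::real_inner \<times> 'a \<Rightarrow> real \<times> 'a \<times> 'a" where
  "lift_pair q = (- inner (fst q) (snd q), q)"

lemma convex_hull_lift_pair_le:
  fixes P :: "('a::real_inner \<times> 'a) set"
  assumes "finite P"
    and mono: "\<And>y v y' v'. (y, v) \<in> P \<Longrightarrow> (y', v') \<in> P \<Longrightarrow> 0 \<le> inner (y - y') (v - v')"
    and "(a, Y, V) \<in> convex hull (lift_pair ` P)"
  shows "a \<le> - inner Y V"
proof -
  define Q where "Q = lift_pair ` P"
  have "finite Q"
    using \<open>finite P\<close> by (simp add: Q_def)
  moreover have "(a, Y, V) \<in> convex hull Q"
    using assms(3) by (simp add: Q_def)
  ultimately obtain u where
    u: "\<And>q. q \<in> Q \<Longrightarrow> 0 \<le> u q" "sum u Q = 1" "(\<Sum>q\<in>Q. u q *\<^sub>R q) = (a, Y, V)"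
    by (auto simp: convex_hull_finite)
  have "a = fst (\<Sum>q\<in>Q. u q *\<^sub>R q)" "Y = fst (snd (\<Sum>q\<in>Q. u q *\<^sub>R q))"
    "V = snd (snd (\<Sum>q\<in>Q. u q *\<^sub>R q))"
    by (simp_all add: u(3))
  then have a: "a = (\<Sum>q\<in>Q. u q * fst q)"
    and Y: "Y = (\<Sum>q\<in>Q. u q *\<^sub>R fst (snd q))" and V: "V = (\<Sum>q\<in>Q. u q *\<^sub>R snd (snd q))"
    by (simp_all add: fst_sum snd_sum)
  have "inner Y V \<le> (\<Sum>q\<in>Q. u q * inner (fst (snd q)) (snd (snd q)))"
    unfolding Y V
  proof (rule monotone_weighted_inner_le[OF \<open>finite Q\<close> u(1,2)])
    show "0 \<le> inner (fst (snd q) - fst (snd q')) (snd (snd q) - snd (snd q'))"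
      if "q \<in> Q" "q' \<in> Q" for q q'
      using that mono by (auto simp: Q_def lift_pair_def)
  qed
  also have "\<dots> = - a"
    unfolding a sum_negf[symmetric] by (auto simp: Q_def lift_pair_def intro: sum.cong)
  finally show ?thesis
    by simp
qed

lemma max_on_convex_first_order:
  fixes K :: "(real \<times> 'a::real_inner \<times> 'a) set"
  assumes "convex K" and "(a, Y, V) \<in> K" and "(b, y, v) \<in> K"
    and max: "\<And>a' Y' V'. (a', Y', V') \<in> K \<Longrightarrow>
                a' - (norm ((Y' - V') /\<^sub>R 2))\<^sup>2 \<le> a - (norm ((Y - V) /\<^sub>R 2))\<^sup>2"
  shows "b - a \<le> 2 * inner ((Y - V) /\<^sub>R 2) ((y - v) /\<^sub>R 2 - (Y - V) /\<^sub>R 2)"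
proof -
  define p where "p = (Y - V) /\<^sub>R 2"
  define D where "D = (norm ((y - v) /\<^sub>R 2 - p))\<^sup>2"
  define X where "X = b - a - 2 * inner p ((y - v) /\<^sub>R 2 - p)"
  have "X \<le> t * D" if "0 < t" "t < 1" for t
  proof -
    have "((1 - t) * a + t * b, (1 - t) *\<^sub>R Y + t *\<^sub>R y, (1 - t) *\<^sub>R V + t *\<^sub>R v) \<in> K"
      using convexD[OF \<open>convex K\<close> assms(2,3), of "1 - t" t] that by simp
    from max[OF this]
    have "(1 - t) * a + t * b - (norm (p + t *\<^sub>R ((y - v) /\<^sub>R 2 - p)))\<^sup>2 \<le> a - (norm p)\<^sup>2"
      by (simp add: p_def algebra_simps)
    moreover have "(norm (p + t *\<^sub>R ((y - v) /\<^sub>R 2 - p)))\<^sup>2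
        = (norm p)\<^sup>2 + 2 * t * inner p ((y - v) /\<^sub>R 2 - p) + t * (t * D)"
      unfolding D_def power2_norm_eq_inner
      by (simp add: inner_add_left inner_add_right inner_commute algebra_simps)
    moreover have "t * X = (1 - t) * a + t * b - a - 2 * t * inner p ((y - v) /\<^sub>R 2 - p)"
      by (simp add: X_def algebra_simps)
    ultimately have "t * X \<le> t * (t * D)"
      by linarith
    then show ?thesis
      using that by simp
  qed
  then have "X \<le> 0"
    by (intro tendsto_lowerbound[of "\<lambda>t. t * D" 0 "at_right 0"])
      (auto simp: eventually_at_right_field intro!: tendsto_eq_intros exI[of _ 1])
  then show ?thesis
    by (simp add: X_def p_def)
qed

text \<open>The witness is \<open>(Y - V) / 2\<close> for a maximiser \<open>(a, Y, V)\<close> of the concave function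
  \<open>a - \<parallel>(Y - V) / 2\<parallel>\<^sup>2\<close> on the convex hull of the lifted pairs.\<close>

lemma finite_monotone_graph_common_point:
  fixes P :: "('a::real_inner \<times> 'a) set"
  assumes "finite P"
    and mono: "\<And>y v y' v'. (y, v) \<in> P \<Longrightarrow> (y', v') \<in> P \<Longrightarrow> 0 \<le> inner (y - y') (v - v')"
  shows "\<exists>p. \<forall>(y, v)\<in>P. inner (p - y) (p + v) \<le> 0"
proof (cases "P = {}")
  case True
  then show ?thesis
    by auto
next
  case False
  define K where "K = convex hull (lift_pair ` P)"
  have K: "compact K" "K \<noteq> {}"
    "continuous_on K (\<lambda>k. fst k - (norm ((fst (snd k) - snd (snd k)) /\<^sub>R 2))\<^sup>2)"
    using \<open>finite P\<close> False unfolding K_def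
    by (auto intro!: finite_imp_compact_convex_hull continuous_intros)
  then obtain k where "k \<in> K"
    and k_max: "\<And>k'. k' \<in> K \<Longrightarrow> fst k' - (norm ((fst (snd k') - snd (snd k')) /\<^sub>R 2))\<^sup>2
                 \<le> fst k - (norm ((fst (snd k) - snd (snd k)) /\<^sub>R 2))\<^sup>2"
    using continuous_attains_sup[OF K] by blast
  obtain a Y V where k: "k = (a, Y, V)"
    using prod_cases3 by blast
  have "(a, Y, V) \<in> K"
    using \<open>k \<in> K\<close> k by simp
  have max: "a' - (norm ((Y' - V') /\<^sub>R 2))\<^sup>2 \<le> a - (norm ((Y - V) /\<^sub>R 2))\<^sup>2"
    if "(a', Y', V') \<in> K" for a' Y' V'
    using k_max[OF that] by (simp add: k)
  define p where "p = (Y - V) /\<^sub>R 2"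
  have "a \<le> - inner Y V"
    using convex_hull_lift_pair_le[OF \<open>finite P\<close> mono] \<open>(a, Y, V) \<in> K\<close> by (simp add: K_def)
  also have "\<dots> = (norm p)\<^sup>2 - (norm ((Y + V) /\<^sub>R 2))\<^sup>2"
    unfolding p_def power2_norm_eq_inner
    by (simp add: inner_add_left inner_add_right inner_diff_left inner_diff_right inner_commute algebra_simps)
  finally have a_le: "a \<le> (norm p)\<^sup>2"
    using zero_le_power2[of "norm ((Y + V) /\<^sub>R 2)"] by linarith
  have "inner (p - y) (p + v) \<le> 0" if "(y, v) \<in> P" for y v
  proof -
    have "lift_pair (y, v) \<in> K"
      unfolding K_def using that by (intro hull_inc imageI)
    then have "(- inner y v, y, v) \<in> K"
      by (simp add: lift_pair_def)
    have "convex K"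
      by (simp add: K_def)
    from max_on_convex_first_order[OF this \<open>(a, Y, V) \<in> K\<close> \<open>(- inner y v, y, v) \<in> K\<close> max]
    have "- inner y v - a \<le> 2 * inner p ((y - v) /\<^sub>R 2 - p)"
      by (simp add: p_def)
    moreover have "inner (p - y) (p + v) = (norm p)\<^sup>2 - 2 * inner p ((y - v) /\<^sub>R 2) - inner y v"
      unfolding power2_norm_eq_inner
      by (simp add: inner_add_left inner_add_right inner_diff_left inner_diff_right inner_commute algebra_simps)
    ultimately show ?thesis
      using a_le by (simp add: inner_diff_right power2_norm_eq_inner)
  qed
  then show ?thesis
    by auto
qed

section \<open>Directed families of closed convex sets\<close>

definition inf_norm_sq :: "'a::real_normed_vector set \<Rightarrow> real" where
  "inf_norm_sq C = Inf ((\<lambda>x. (norm x)\<^sup>2) ` C)"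

lemma inf_norm_sq_le: "x \<in> C \<Longrightarrow> inf_norm_sq C \<le> (norm x)\<^sup>2"
  unfolding inf_norm_sq_def by (rule cInf_lower) (auto intro: bdd_belowI[where m=0])

lemma inf_norm_sq_approx:
  assumes "C \<noteq> {}" and "0 < \<epsilon>"
  obtains x where "x \<in> C" and "(norm x)\<^sup>2 < inf_norm_sq C + \<epsilon>"
proof -
  have bdd: "bdd_below ((\<lambda>x. (norm x)\<^sup>2) ` C)"
    by (rule bdd_belowI[where m=0]) auto
  have "\<exists>x\<in>C. (norm x)\<^sup>2 < inf_norm_sq C + \<epsilon>"
    using cInf_less_iff[OF _ bdd, of "inf_norm_sq C + \<epsilon>"] assms by (simp add: inf_norm_sq_def)
  then show ?thesis
    using that by blast
qed

lemma inf_norm_sq_mono: "C' \<noteq> {} \<Longrightarrow> C' \<subseteq> C \<Longrightarrow> inf_norm_sq C \<le> inf_norm_sq C'"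
  unfolding inf_norm_sq_def[of C'] using inf_norm_sq_le by (intro cInf_greatest) auto

lemma parallelogram_law:
  fixes p q :: "'a::real_inner"
  shows "(norm (p - q))\<^sup>2 + (norm (p + q))\<^sup>2 = 2 * (norm p)\<^sup>2 + 2 * (norm q)\<^sup>2"
  unfolding power2_norm_eq_inner
  by (simp add: inner_add_left inner_add_right inner_diff_left inner_diff_right inner_commute)

lemma near_inf_norm_sq_dist:
  fixes x y :: "'a::real_inner"
  assumes "convex C" "x \<in> C" "y \<in> C"
    and "d - \<epsilon> \<le> inf_norm_sq C" "(norm x)\<^sup>2 \<le> d + \<epsilon>" "(norm y)\<^sup>2 \<le> d + \<epsilon>"
  shows "norm (x - y) \<le> sqrt (8 * \<epsilon>)"
proof (rule real_le_rsqrt)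
  have "(1/2) *\<^sub>R (x + y) \<in> C"
    using convexD[OF assms(1-3), of "1/2" "1/2"] by (simp add: scaleR_add_right)
  then have "inf_norm_sq C \<le> (norm (x + y))\<^sup>2 / 4"
    using inf_norm_sq_le[of "(1/2) *\<^sub>R (x + y)" C] by (simp add: power_divide)
  then show "(norm (x - y))\<^sup>2 \<le> 8 * \<epsilon>"
    using parallelogram_law[of x y] assms(4-6) by linarith
qed

lemma common_limit_if_dist_le_null:
  fixes q :: "nat \<Rightarrow> 'i \<Rightarrow> 'a::complete_space"
  assumes "i0 \<in> I"
    and dist: "\<And>m n i i'. n \<le> m \<Longrightarrow> i \<in> I \<Longrightarrow> i' \<in> I \<Longrightarrow> dist (q m i) (q n i') \<le> c n"
    and "c \<longlonglongrightarrow> 0"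
  obtains l where "\<And>i. i \<in> I \<Longrightarrow> (\<lambda>n. q n i) \<longlonglongrightarrow> l"
proof -
  have "Cauchy (\<lambda>n. q n i0)"
  proof (rule metric_CauchyI)
    fix \<epsilon> :: real
    assume "0 < \<epsilon>"
    then obtain M where M: "\<And>n. M \<le> n \<Longrightarrow> c n < \<epsilon>"
      using \<open>c \<longlonglongrightarrow> 0\<close> by (fastforce simp: lim_sequentially dist_real_def)
    have "dist (q m i0) (q n i0) < \<epsilon>" if "M \<le> m" "M \<le> n" for m n
    proof (cases "n \<le> m")
      case True
      then show ?thesis
        using dist[OF True \<open>i0 \<in> I\<close> \<open>i0 \<in> I\<close>] M[OF that(2)] by linarith
    next
      case False
      then show ?thesis
        using dist[of m n i0 i0] \<open>i0 \<in> I\<close> M[OF that(1)] dist_commute[of "q m i0" "q n i0"] by simp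
    qed
    then show "\<exists>M. \<forall>m\<ge>M. \<forall>n\<ge>M. dist (q m i0) (q n i0) < \<epsilon>"
      by blast
  qed
  then obtain l where l: "(\<lambda>n. q n i0) \<longlonglongrightarrow> l"
    using Cauchy_convergent_iff convergent_def by blast
  have "(\<lambda>n. q n i) \<longlonglongrightarrow> l" if "i \<in> I" for i
  proof -
    have "(\<lambda>n. c n + dist (q n i0) l) \<longlonglongrightarrow> 0 + 0"
      using \<open>c \<longlonglongrightarrow> 0\<close> tendsto_dist_iff[THEN iffD1, OF l] by (rule tendsto_add)
    then have bound_lim: "(\<lambda>n. c n + dist (q n i0) l) \<longlonglongrightarrow> 0"
      by simp
    have "dist (q n i) l \<le> c n + dist (q n i0) l" for n
      using dist[OF order_refl that \<open>i0 \<in> I\<close>, of n] dist_triangle[of "q n i" l "q n i0"] by linarith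
    then have "(\<lambda>n. dist (q n i) l) \<longlonglongrightarrow> 0"
      by (intro tendsto_sandwich[OF always_eventually always_eventually tendsto_const bound_lim]) auto
    then show ?thesis
      by (rule tendsto_dist_iff[THEN iffD2])
  qed
  then show ?thesis
    using that by blast
qed

definition downward_directed :: "'a set set \<Rightarrow> bool" where
  "downward_directed \<D> \<longleftrightarrow> (\<forall>C\<in>\<D>. \<forall>C'\<in>\<D>. \<exists>C''\<in>\<D>. C'' \<subseteq> C \<inter> C')"

lemma downward_directedD:
  "downward_directed \<D> \<Longrightarrow> C \<in> \<D> \<Longrightarrow> C' \<in> \<D> \<Longrightarrow> \<exists>C''\<in>\<D>. C'' \<subseteq> C \<inter> C'"
  unfolding downward_directed_def by blast

lemma directed_inf_norm_sq_bdd_above: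
  fixes \<D> :: "'a::real_normed_vector set set"
  assumes "C0 \<in> \<D>" and "bounded C0" and nonempty: "\<And>C. C \<in> \<D> \<Longrightarrow> C \<noteq> {}"
    and directed: "downward_directed \<D>"
  shows "bdd_above (inf_norm_sq ` \<D>)"
proof -
  obtain R where R: "\<And>x. x \<in> C0 \<Longrightarrow> norm x \<le> R"
    using \<open>bounded C0\<close> by (auto simp: bounded_iff)
  have "inf_norm_sq C \<le> R\<^sup>2" if C: "C \<in> \<D>" for C
  proof -
    obtain C'' where C'': "C'' \<in> \<D>" "C'' \<subseteq> C \<inter> C0"
      using downward_directedD[OF directed C \<open>C0 \<in> \<D>\<close>] by blast
    then obtain x where "x \<in> C''"
      using nonempty by blast
    then have "inf_norm_sq C \<le> (norm x)\<^sup>2" "norm x \<le> R"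
      using C'' R by (auto intro: inf_norm_sq_le)
    moreover have "(norm x)\<^sup>2 \<le> R\<^sup>2"
      using \<open>norm x \<le> R\<close> by (rule power_mono) simp
    ultimately show ?thesis
      by linarith
  qed
  then show ?thesis
    by (intro bdd_aboveI[where M="R\<^sup>2"]) auto
qed

definition near_min_norm :: "'a::real_normed_vector set set \<Rightarrow> real \<Rightarrow> 'a \<Rightarrow> bool" where
  "near_min_norm \<D> \<epsilon> x \<longleftrightarrow> (\<exists>C\<in>\<D>. x \<in> C \<and> Sup (inf_norm_sq ` \<D>) - \<epsilon> \<le> inf_norm_sq C
                                \<and> (norm x)\<^sup>2 \<le> Sup (inf_norm_sq ` \<D>) + \<epsilon>)"

lemma near_min_norm_mono: "near_min_norm \<D> \<epsilon> x \<Longrightarrow> \<epsilon> \<le> \<epsilon>' \<Longrightarrow> near_min_norm \<D> \<epsilon>' x"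
  unfolding near_min_norm_def by (meson add_left_mono diff_left_mono order_trans)

lemma near_min_norm_exists:
  fixes \<D> :: "'a::real_normed_vector set set"
  assumes bdd: "bdd_above (inf_norm_sq ` \<D>)" and "0 < \<epsilon>" and "C \<in> \<D>"
    and nonempty: "\<And>C. C \<in> \<D> \<Longrightarrow> C \<noteq> {}"
    and directed: "downward_directed \<D>"
  shows "\<exists>x. near_min_norm \<D> \<epsilon> x \<and> x \<in> C"
proof -
  define d where "d = Sup (inf_norm_sq ` \<D>)"
  obtain C' where "C' \<in> \<D>" "d - \<epsilon> < inf_norm_sq C'"
    using less_cSup_iff[OF _ bdd, of "d - \<epsilon>"] \<open>C \<in> \<D>\<close> \<open>0 < \<epsilon>\<close> by (auto simp: d_def)
  moreover obtain C'' where C'': "C'' \<in> \<D>" "C'' \<subseteq> C \<inter> C'"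
    using downward_directedD[OF directed \<open>C \<in> \<D>\<close> \<open>C' \<in> \<D>\<close>] by blast
  moreover obtain x where "x \<in> C''" "(norm x)\<^sup>2 < inf_norm_sq C'' + \<epsilon>"
    using inf_norm_sq_approx[of C'' \<epsilon>] nonempty[OF \<open>C'' \<in> \<D>\<close>] \<open>0 < \<epsilon>\<close> by blast
  moreover have "inf_norm_sq C' \<le> inf_norm_sq C''" "inf_norm_sq C'' \<le> d"
    using C'' nonempty bdd by (auto simp: d_def intro: inf_norm_sq_mono cSup_upper)
  ultimately show ?thesis
    unfolding near_min_norm_def d_def[symmetric] by (intro exI[of _ x] conjI bexI[of _ C'']) auto
qed

lemma near_min_norm_dist:
  fixes \<D> :: "'a::real_inner set set"
  assumes "bdd_above (inf_norm_sq ` \<D>)" and "0 < \<epsilon>"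
    and sets: "\<And>C. C \<in> \<D> \<Longrightarrow> convex C \<and> C \<noteq> {}"
    and directed: "downward_directed \<D>"
    and near: "near_min_norm \<D> \<epsilon> x" "near_min_norm \<D> \<epsilon> y"
  shows "norm (x - y) \<le> 2 * sqrt (8 * \<epsilon>)"
proof -
  define d where "d = Sup (inf_norm_sq ` \<D>)"
  obtain C C' where C: "C \<in> \<D>" "x \<in> C" "d - \<epsilon> \<le> inf_norm_sq C" "(norm x)\<^sup>2 \<le> d + \<epsilon>"
    and C': "C' \<in> \<D>" "y \<in> C'" "d - \<epsilon> \<le> inf_norm_sq C'" "(norm y)\<^sup>2 \<le> d + \<epsilon>"
    using near by (auto simp: near_min_norm_def d_def)
  have nonempty: "C \<noteq> {}" if "C \<in> \<D>" for C
    using sets[OF that] by blast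
  obtain C'' where "C'' \<in> \<D>" "C'' \<subseteq> C \<inter> C'"
    using downward_directedD[OF directed C(1) C'(1)] by blast
  with near_min_norm_exists[OF assms(1,2) \<open>C'' \<in> \<D>\<close> nonempty directed]
  obtain r where r: "near_min_norm \<D> \<epsilon> r" "r \<in> C \<inter> C'"
    by blast
  have "(norm r)\<^sup>2 \<le> d + \<epsilon>"
    using r(1) by (auto simp: near_min_norm_def d_def)
  then have "norm (x - r) \<le> sqrt (8 * \<epsilon>)" "norm (y - r) \<le> sqrt (8 * \<epsilon>)"
    using near_inf_norm_sq_dist[of C x r] near_inf_norm_sq_dist[of C' y r] C C' r(2)
      sets[OF C(1)] sets[OF C'(1)] by auto
  then show ?thesis
    using norm_triangle_ineq4[of "x - r" "y - r"] by simp
qed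

text \<open>Closed bounded convex sets in a Hilbert space are weakly compact; the minimal-norm points
  of ever smaller members of the family replace that compactness argument.\<close>

lemma directed_closed_convex_Inter_nonempty:
  fixes \<D> :: "'a::{real_inner,complete_space} set set"
  assumes "\<D> \<noteq> {}"
    and sets: "\<And>C. C \<in> \<D> \<Longrightarrow> closed C \<and> convex C \<and> bounded C \<and> C \<noteq> {}"
    and directed: "downward_directed \<D>"
  shows "\<Inter>\<D> \<noteq> {}"
proof -
  obtain C0 where "C0 \<in> \<D>"
    using \<open>\<D> \<noteq> {}\<close> by blast
  have nonempty: "C \<noteq> {}" and convex_ne: "convex C \<and> C \<noteq> {}" if "C \<in> \<D>" for C
    using sets[OF that] by blast+
  have bdd: "bdd_above (inf_norm_sq ` \<D>)"
  proof (rule directed_inf_norm_sq_bdd_above[OF \<open>C0 \<in> \<D>\<close> _ nonempty directed])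
    show "bounded C0"
      using sets[OF \<open>C0 \<in> \<D>\<close>] by blast
  qed
  define q where "q n C = (SOME x. near_min_norm \<D> (1 / Suc n) x \<and> x \<in> C)" for n C
  have q: "near_min_norm \<D> (1 / Suc n) (q n C) \<and> q n C \<in> C" if "C \<in> \<D>" for n C
    unfolding q_def by (rule someI_ex, rule near_min_norm_exists[OF bdd _ that nonempty directed]) simp
  have dist_q: "dist (q m C) (q n C') \<le> 2 * sqrt (8 * (1 / Suc n))"
    if "n \<le> m" "C \<in> \<D>" "C' \<in> \<D>" for m n C C'
  proof -
    have "1 / real (Suc m) \<le> 1 / real (Suc n)"
      using that(1) by (simp add: frac_le)
    then have "near_min_norm \<D> (1 / Suc n) (q m C)"
      using near_min_norm_mono conjunct1[OF q[OF that(2), of m]] by blast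
    from near_min_norm_dist[OF bdd _ convex_ne directed this conjunct1[OF q[OF that(3), of n]]]
    show ?thesis
      by (simp add: dist_norm)
  qed
  have "(\<lambda>n. 1 / real (Suc n)) \<longlonglongrightarrow> 0"
    using LIMSEQ_inverse_real_of_nat by (simp add: inverse_eq_divide)
  from tendsto_mult[OF tendsto_const tendsto_real_sqrt[OF tendsto_mult[OF tendsto_const this]], of 2 8]
  have "(\<lambda>n. 2 * sqrt (8 * (1 / real (Suc n)))) \<longlonglongrightarrow> 0"
    by simp
  with common_limit_if_dist_le_null[where q=q, OF \<open>C0 \<in> \<D>\<close> dist_q]
  obtain l where l: "\<And>C. C \<in> \<D> \<Longrightarrow> (\<lambda>n. q n C) \<longlonglongrightarrow> l"
    by blast
  have "l \<in> C" if "C \<in> \<D>" for C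
  proof (rule closed_sequentially[OF _ _ l[OF that]])
    show "closed C" "q n C \<in> C" for n
      using sets[OF that] q[OF that] by blast+
  qed
  then show ?thesis
    by blast
qed

lemma closed_convex_fip_Inter_nonempty:
  fixes S :: "'i \<Rightarrow> 'a::{real_inner,complete_space} set"
  assumes closed: "\<And>i. i \<in> I \<Longrightarrow> closed (S i)" and convex: "\<And>i. i \<in> I \<Longrightarrow> convex (S i)"
    and "i0 \<in> I" and "bounded (S i0)"
    and fip: "\<And>F. finite F \<Longrightarrow> F \<subseteq> I \<Longrightarrow> (\<Inter>i\<in>F. S i) \<noteq> {}"
  shows "(\<Inter>i\<in>I. S i) \<noteq> {}"
proof -
  define \<D> where "\<D> = {(\<Inter>i\<in>insert i0 F. S i) | F. finite F \<and> F \<subseteq> I}"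
  have nonempty: "\<Inter>\<D> \<noteq> {}"
  proof (rule directed_closed_convex_Inter_nonempty)
    show "\<D> \<noteq> {}"
      by (auto simp: \<D>_def)
    show "closed C \<and> convex C \<and> bounded C \<and> C \<noteq> {}" if C_in: "C \<in> \<D>" for C
    proof -
      obtain F where F: "finite F" "F \<subseteq> I" and C: "C = (\<Inter>i\<in>insert i0 F. S i)"
        using C_in by (auto simp: \<D>_def)
      have "insert i0 F \<subseteq> I"
        using F(2) \<open>i0 \<in> I\<close> by blast
      then have "closed C" "convex C"
        unfolding C using closed convex by (blast intro: closed_INT convex_INT)+
      moreover have "C \<noteq> {}"
        unfolding C using fip \<open>insert i0 F \<subseteq> I\<close> F(1) by blast
      moreover have "bounded C"
        unfolding C by (rule bounded_subset[OF \<open>bounded (S i0)\<close>]) blast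
      ultimately show ?thesis
        by blast
    qed
    show "downward_directed \<D>"
      unfolding downward_directed_def
    proof (intro ballI)
      fix C C'
      assume CC': "C \<in> \<D>" "C' \<in> \<D>"
      obtain F F' where "finite F" "F \<subseteq> I" "C = (\<Inter>i\<in>insert i0 F. S i)"
        "finite F'" "F' \<subseteq> I" "C' = (\<Inter>i\<in>insert i0 F'. S i)"
        using CC' by (auto simp: \<D>_def)
      then show "\<exists>C''\<in>\<D>. C'' \<subseteq> C \<inter> C'"
        by (auto simp: \<D>_def intro!: exI[of _ "F \<union> F'"])
    qed
  qed
  have "\<Inter>\<D> \<subseteq> S i" if "i \<in> I" for i
  proof -
    have "(\<Inter>j\<in>insert i0 {i}. S j) \<in> \<D>"
      unfolding \<D>_def using that by blast
    then show ?thesis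
      by blast
  qed
  then show ?thesis
    using nonempty by blast
qed

section \<open>Minty's theorem\<close>

lemma monotone_opD:
  assumes "monotone_op B" "u \<in> B x" "v \<in> B y"
  shows "0 \<le> inner (x - y) (u - v)"
  using assms unfolding monotone_op_def by blast

lemma maximal_monotone_imp_monotone_op: "maximal_monotone B \<Longrightarrow> monotone_op B"
  by (simp add: maximal_monotone_def)

lemma maximal_monotoneD:
  assumes "maximal_monotone B" and "\<And>y v. v \<in> B y \<Longrightarrow> 0 \<le> inner (x - y) (u - v)"
  shows "u \<in> B x"
  using assms unfolding maximal_monotone_def by blast

lemma inner_nonpos_set_eq_cball:
  fixes y v :: "'a::real_inner"
  shows "{p. inner (p - y) (p + v) \<le> 0} = cball ((y - v) /\<^sub>R 2) (norm (y + v) / 2)"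
proof -
  have "inner (p - y) (p + v) = (dist ((y - v) /\<^sub>R 2) p)\<^sup>2 - (norm (y + v) / 2)\<^sup>2" for p
    unfolding dist_norm power_divide power2_norm_eq_inner
    by (simp add: inner_add_left inner_add_right inner_diff_left inner_diff_right inner_commute algebra_simps)
  then show ?thesis
    by (auto simp: cball_def power_mono_iff simp del: power_divide)
qed

text \<open>Testing the candidate point p against every pair \<open>(y, \<alpha>v - z)\<close> of the shifted graph
  gives a family of closed balls; finitely many of them meet by monotonicity, hence all of them
  do, and maximality puts \<open>(z - p) / \<alpha>\<close> into \<open>B p\<close>.\<close>

theorem maximal_monotone_Minty:
  fixes B :: "'a::{real_inner,complete_space} \<Rightarrow> 'a set"
  assumes mm: "maximal_monotone B" and "0 < \<alpha>"
  shows "\<exists>p. (1 / \<alpha>) *\<^sub>R (z - p) \<in> B p"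
proof -
  define I where "I = {(y, \<alpha> *\<^sub>R v - z) | y v. v \<in> B y}"
  define S :: "'a \<times> 'a \<Rightarrow> 'a set" where "S = (\<lambda>(y, w). {p. inner (p - y) (p + w) \<le> 0})"
  have mono: "0 \<le> inner (y - y') (w - w')" if yw: "(y, w) \<in> I" "(y', w') \<in> I" for y w y' w'
  proof -
    obtain v v' where "v \<in> B y" "v' \<in> B y'" "w = \<alpha> *\<^sub>R v - z" "w' = \<alpha> *\<^sub>R v' - z"
      using yw by (auto simp: I_def)
    then show ?thesis
      using monotone_opD[OF maximal_monotone_imp_monotone_op[OF mm]] \<open>0 < \<alpha>\<close>
      by (simp add: scaleR_diff_right[symmetric])
  qed
  have "\<exists>y v. v \<in> B y"
  proof (rule ccontr)
    assume none: "\<not> (\<exists>y v. v \<in> B y)"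
    then have "0 \<in> B 0"
      by (intro maximal_monotoneD[OF mm]) auto
    with none show False
      by blast
  qed
  then obtain y v where "v \<in> B y"
    by blast
  then have "(y, \<alpha> *\<^sub>R v - z) \<in> I"
    by (auto simp: I_def)
  moreover have "closed (S i)" "convex (S i)" "bounded (S i)" for i
    by (simp_all add: S_def inner_nonpos_set_eq_cball split: prod.splits)
  moreover have "(\<Inter>i\<in>F. S i) \<noteq> {}" if F: "finite F" "F \<subseteq> I" for F
  proof -
    have "\<exists>p. \<forall>(y, w)\<in>F. inner (p - y) (p + w) \<le> 0"
      using F(2) by (intro finite_monotone_graph_common_point[OF F(1)] mono) auto
    then obtain p where "\<forall>(y, w)\<in>F. inner (p - y) (p + w) \<le> 0"
      by blast
    then have "p \<in> (\<Inter>i\<in>F. S i)"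
      by (auto simp: S_def)
    then show ?thesis
      by blast
  qed
  ultimately have "(\<Inter>i\<in>I. S i) \<noteq> {}"
    by (intro closed_convex_fip_Inter_nonempty[of I S]) auto
  then obtain p where p: "\<And>i. i \<in> I \<Longrightarrow> p \<in> S i"
    by blast
  have "(1 / \<alpha>) *\<^sub>R (z - p) \<in> B p"
  proof (rule maximal_monotoneD[OF mm])
    fix y v
    assume "v \<in> B y"
    then have "inner (p - y) (p + (\<alpha> *\<^sub>R v - z)) \<le> 0"
      using p[of "(y, \<alpha> *\<^sub>R v - z)"] by (auto simp: I_def S_def)
    moreover have "inner (p - y) ((1 / \<alpha>) *\<^sub>R (z - p) - v) = - inner (p - y) (p + (\<alpha> *\<^sub>R v - z)) / \<alpha>"
      using \<open>0 < \<alpha>\<close> by (simp add: inner_diff_right inner_add_right field_simps)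
    ultimately show "0 \<le> inner (p - y) ((1 / \<alpha>) *\<^sub>R (z - p) - v)"
      using \<open>0 < \<alpha>\<close> by (simp add: divide_nonpos_pos)
  qed
  then show ?thesis
    by blast
qed

lemma resolvent_in:
  fixes B :: "'a::{real_inner,complete_space} \<Rightarrow> 'a set"
  assumes mm: "maximal_monotone B" and "0 < \<alpha>"
  shows "(1 / \<alpha>) *\<^sub>R (z - resolvent \<alpha> B z) \<in> B (resolvent \<alpha> B z)"
proof -
  have iff: "(\<exists>u\<in>B p. z = p + \<alpha> *\<^sub>R u) \<longleftrightarrow> (1 / \<alpha>) *\<^sub>R (z - p) \<in> B p" for p
  proof
    assume "\<exists>u\<in>B p. z = p + \<alpha> *\<^sub>R u"
    then show "(1 / \<alpha>) *\<^sub>R (z - p) \<in> B p"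
      using \<open>0 < \<alpha>\<close> by auto
  next
    assume "(1 / \<alpha>) *\<^sub>R (z - p) \<in> B p"
    then show "\<exists>u\<in>B p. z = p + \<alpha> *\<^sub>R u"
      using \<open>0 < \<alpha>\<close> by (intro bexI[of _ "(1 / \<alpha>) *\<^sub>R (z - p)"]) auto
  qed
  obtain p where p: "(1 / \<alpha>) *\<^sub>R (z - p) \<in> B p"
    using maximal_monotone_Minty[OF mm \<open>0 < \<alpha>\<close>] by blast
  have "q = p" if q: "(1 / \<alpha>) *\<^sub>R (z - q) \<in> B q" for q
  proof -
    have "0 \<le> inner (q - p) ((1 / \<alpha>) *\<^sub>R (z - q) - (1 / \<alpha>) *\<^sub>R (z - p))"
      using monotone_opD[OF maximal_monotone_imp_monotone_op[OF mm] q p] .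
    also have "\<dots> = inner (q - p) ((1 / \<alpha>) *\<^sub>R (p - q))"
      by (simp add: algebra_simps)
    also have "\<dots> = - (norm (q - p))\<^sup>2 / \<alpha>"
      by (simp add: power2_norm_eq_inner minus_diff_eq[symmetric, of q p] del: minus_diff_eq)
    finally have "(norm (q - p))\<^sup>2 \<le> 0"
      using \<open>0 < \<alpha>\<close> by (simp add: divide_le_0_iff)
    then show "q = p"
      by simp
  qed
  then have "resolvent \<alpha> B z = p"
    unfolding resolvent_def iff using p by blast
  then show ?thesis
    using p by simp
qed

lemma resolvent_forward_step_in:
  fixes B :: "'a::{real_inner,complete_space} \<Rightarrow> 'a set"
  assumes "maximal_monotone B" and "0 < \<alpha>" and xbar: "xbar = resolvent \<alpha> B (x - \<alpha> *\<^sub>R a)"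
  shows "(1 / \<alpha>) *\<^sub>R (x - xbar) - a \<in> B xbar"
proof -
  have "(1 / \<alpha>) *\<^sub>R (x - \<alpha> *\<^sub>R a - xbar) \<in> B xbar"
    using resolvent_in[OF assms(1,2)] unfolding xbar .
  moreover have "(1 / \<alpha>) *\<^sub>R (x - \<alpha> *\<^sub>R a - xbar) = (1 / \<alpha>) *\<^sub>R (x - xbar) - a"
    using \<open>0 < \<alpha>\<close> by (simp add: algebra_simps)
  ultimately show ?thesis
    by simp
qed

section \<open>Projection onto a halfspace\<close>

lemma proj_eqI:
  fixes C :: "'a::real_inner set"
  assumes "p \<in> C" and pyth: "\<And>y. y \<in> C \<Longrightarrow> (norm (p - y))\<^sup>2 + (norm (x - p))\<^sup>2 \<le> (norm (x - y))\<^sup>2"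
  shows "proj C x = p"
  unfolding proj_def
proof (rule the_equality)
  have "norm (x - p) \<le> norm (x - y)" if "y \<in> C" for y
  proof -
    have "(norm (x - p))\<^sup>2 \<le> (norm (x - y))\<^sup>2"
      using pyth[OF that] zero_le_power2[of "norm (p - y)"] by linarith
    then show ?thesis
      by (rule power2_le_imp_le) simp
  qed
  then show "p \<in> C \<and> (\<forall>y\<in>C. norm (x - p) \<le> norm (x - y))"
    using \<open>p \<in> C\<close> by blast
next
  fix q
  assume q: "q \<in> C \<and> (\<forall>y\<in>C. norm (x - q) \<le> norm (x - y))"
  then have "norm (x - q) \<le> norm (x - p)"
    using \<open>p \<in> C\<close> by blast
  then have "(norm (x - q))\<^sup>2 \<le> (norm (x - p))\<^sup>2"
    by (rule power_mono) simp
  moreover have "(norm (p - q))\<^sup>2 + (norm (x - p))\<^sup>2 \<le> (norm (x - q))\<^sup>2"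
    using pyth q by blast
  ultimately have "(norm (p - q))\<^sup>2 \<le> 0"
    by linarith
  then show "q = p"
    by simp
qed

lemma proj_eq_self: "x \<in> C \<Longrightarrow> proj C x = x"
  by (rule proj_eqI) simp_all

lemma halfspace_foot:
  fixes w x :: "'a::real_inner"
  assumes "w \<noteq> 0" and "b < inner w x"
  defines "p \<equiv> x - ((inner w x - b) / (norm w)\<^sup>2) *\<^sub>R w"
  shows halfspace_foot_inner: "inner w p = b"
    and halfspace_foot_dist: "norm (x - p) * norm w = inner w x - b"
    and halfspace_foot_pythagoras:
      "inner w y \<le> b \<Longrightarrow> (norm (p - y))\<^sup>2 + (norm (x - p))\<^sup>2 \<le> (norm (x - y))\<^sup>2"
proof -
  define l where "l = (inner w x - b) / (norm w)\<^sup>2"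
  have "0 < l"
    using assms by (simp add: l_def)
  have p: "p = x - l *\<^sub>R w"
    by (simp add: p_def l_def)
  show "inner w p = b"
    using \<open>w \<noteq> 0\<close> by (simp add: p l_def inner_diff_right power2_norm_eq_inner)
  show "norm (x - p) * norm w = inner w x - b"
    using assms by (simp add: p l_def power2_eq_square)
  assume "inner w y \<le> b"
  moreover have "inner (l *\<^sub>R w) (p - y) = l * (inner w p - inner w y)"
    by (simp add: inner_diff_right right_diff_distrib)
  ultimately have "0 \<le> inner (l *\<^sub>R w) (p - y)"
    using \<open>0 < l\<close> \<open>inner w p = b\<close> by simp
  moreover have "(norm (x - y))\<^sup>2 = (norm (p - y))\<^sup>2 + (norm (l *\<^sub>R w))\<^sup>2 + 2 * inner (l *\<^sub>R w) (p - y)"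
    unfolding power2_norm_eq_inner p
    by (simp add: inner_diff_left inner_diff_right inner_commute algebra_simps)
  ultimately show "(norm (p - y))\<^sup>2 + (norm (x - p))\<^sup>2 \<le> (norm (x - y))\<^sup>2"
    by (simp add: p)
qed

lemma proj_halfspace:
  fixes w x :: "'a::real_inner"
  assumes "w \<noteq> 0" and "b < inner w x"
  shows "proj {z. inner w z \<le> b} x = x - ((inner w x - b) / (norm w)\<^sup>2) *\<^sub>R w"
  using halfspace_foot_inner[OF assms] halfspace_foot_pythagoras[OF assms] by (intro proj_eqI) auto

section \<open>One step of the method\<close>

lemma zer_sum_in_halfspace:
  fixes A1 A2 :: "'a::real_inner \<Rightarrow> 'a" and B :: "'a \<Rightarrow> 'a set"
  assumes coco: "cocoercive \<beta> A1" and "0 < \<beta>"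
    and A2: "monotone_op (\<lambda>x. {A2 x})" and B: "monotone_op B"
    and "0 < \<alpha>" and "\<alpha> \<le> 4 * \<beta> * \<delta>bar"
    and incl: "(1 / \<alpha>) *\<^sub>R (x - xbar) - (A1 x + A2 x) \<in> B xbar"
    and z: "z \<in> zer_sum (\<lambda>x. A1 x + A2 x) B"
  shows "inner ((1 / \<alpha>) *\<^sub>R (x - xbar) - (A2 x - A2 xbar)) (z - xbar)
           \<le> \<delta>bar / \<alpha> * (norm (x - xbar))\<^sup>2"
proof -
  define u where "u = (1 / \<alpha>) *\<^sub>R (x - xbar) - (A1 x + A2 x)"
  define a where "a = A1 x - A1 z"
  define d where "d = norm (x - xbar)"
  have swap: "inner v (p - q) = - inner (q - p) v" for v p q :: 'a
    by (simp add: inner_diff_left inner_diff_right inner_commute)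
  have "- (A1 z + A2 z) \<in> B z"
    using z by (auto simp: zer_sum_def add_eq_0_iff)
  then have "0 \<le> inner (xbar - z) (u - - (A1 z + A2 z))"
    using monotone_opD[OF B incl[folded u_def]] by blast
  then have B_part: "inner (u + (A1 z + A2 z)) (z - xbar) \<le> 0"
    unfolding diff_minus_eq_add swap[of _ z xbar] by simp
  have "0 \<le> inner (xbar - z) (A2 xbar - A2 z)"
    using monotone_opD[OF A2, of "A2 xbar" xbar "A2 z" z] by simp
  then have A2_part: "inner (A2 xbar - A2 z) (z - xbar) \<le> 0"
    by (simp add: swap[of _ z xbar])
  have "\<beta> * (norm a)\<^sup>2 \<le> inner a (x - z)"
    using coco unfolding cocoercive_def a_def by blast
  then have "inner a (z - x) \<le> - \<beta> * (norm a)\<^sup>2"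
    by (simp add: inner_diff_right)
  moreover have "inner a (x - xbar) \<le> norm a * d"
    unfolding d_def by (rule norm_cauchy_schwarz)
  moreover have "norm a * d - \<beta> * (norm a)\<^sup>2 \<le> d\<^sup>2 / (4 * \<beta>)"
  proof -
    have "4 * \<beta> * (norm a * d - \<beta> * (norm a)\<^sup>2) \<le> d\<^sup>2"
      using zero_le_power2[of "d - 2 * \<beta> * norm a"] by (simp add: power2_eq_square algebra_simps)
    then show ?thesis
      using \<open>0 < \<beta>\<close> by (simp add: field_simps)
  qed
  moreover have "d\<^sup>2 / (4 * \<beta>) \<le> \<delta>bar / \<alpha> * d\<^sup>2"
  proof -
    have "\<alpha> * d\<^sup>2 \<le> (4 * \<beta> * \<delta>bar) * d\<^sup>2"
      using \<open>\<alpha> \<le> 4 * \<beta> * \<delta>bar\<close> by (rule mult_right_mono) simp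
    then show ?thesis
      using \<open>0 < \<alpha>\<close> \<open>0 < \<beta>\<close> by (simp add: field_simps)
  qed
  ultimately have A1_part: "inner a (z - xbar) \<le> \<delta>bar / \<alpha> * d\<^sup>2"
    by (simp add: inner_diff_right)
  have "(1 / \<alpha>) *\<^sub>R (x - xbar) - (A2 x - A2 xbar) = (u + (A1 z + A2 z)) + a + (A2 xbar - A2 z)"
    by (simp add: u_def a_def algebra_simps)
  then have "inner ((1 / \<alpha>) *\<^sub>R (x - xbar) - (A2 x - A2 xbar)) (z - xbar)
      = inner (u + (A1 z + A2 z)) (z - xbar) + inner a (z - xbar) + inner (A2 xbar - A2 z) (z - xbar)"
    by (simp only: inner_add_left)
  then show ?thesis
    using B_part A2_part A1_part unfolding d_def by linarith
qed

lemma forward_backward_projection_step: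
  fixes A1 A2 :: "'a::{real_inner,complete_space} \<Rightarrow> 'a" and B :: "'a \<Rightarrow> 'a set"
  assumes coco: "cocoercive \<beta> A1" and "0 < \<beta>"
    and A2: "monotone_op (\<lambda>x. {A2 x})" and B: "maximal_monotone B"
    and "0 < \<alpha>" and "\<alpha> \<le> 4 * \<beta> * \<delta>bar" and "0 \<le> \<delta>bar"
    and xbar: "xbar = resolvent \<alpha> B (x - \<alpha> *\<^sub>R (A1 x + A2 x))"
    and x': "x' = proj {z. inner ((1 / \<alpha>) *\<^sub>R (x - xbar) - (A2 x - A2 xbar)) (z - xbar)
                       \<le> \<delta>bar / \<alpha> * (norm (x - xbar))\<^sup>2} x"
    and "x' \<noteq> x"
  shows "\<And>z. z \<in> zer_sum (\<lambda>x. A1 x + A2 x) B \<Longrightarrow>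
           (norm (x' - z))\<^sup>2 + (norm (x - x'))\<^sup>2 \<le> (norm (x - z))\<^sup>2"
    and "inner (x - xbar - \<alpha> *\<^sub>R (A2 x - A2 xbar)) (x - xbar) - \<delta>bar * (norm (x - xbar))\<^sup>2
           = norm (x - xbar - \<alpha> *\<^sub>R (A2 x - A2 xbar)) * norm (x - x')"
proof -
  define w where "w = (1 / \<alpha>) *\<^sub>R (x - xbar) - (A2 x - A2 xbar)"
  define r where "r = \<delta>bar / \<alpha> * (norm (x - xbar))\<^sup>2"
  define b where "b = r + inner w xbar"
  have T: "{z. inner w (z - xbar) \<le> r} = {z. inner w z \<le> b}"
    by (auto simp: b_def inner_diff_right)
  have "x' = proj {z. inner w (z - xbar) \<le> r} x"
    unfolding w_def r_def by (rule x')
  then have x'_proj: "x' = proj {z. inner w z \<le> b} x"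
    unfolding T .
  have "0 \<le> r"
    using \<open>0 < \<alpha>\<close> \<open>0 \<le> \<delta>bar\<close> by (simp add: r_def)
  have "b < inner w x"
  proof (rule ccontr)
    assume "\<not> b < inner w x"
    then have "x' = x"
      using x'_proj by (simp add: proj_eq_self)
    with \<open>x' \<noteq> x\<close> show False ..
  qed
  moreover have "w \<noteq> 0"
    using \<open>b < inner w x\<close> \<open>0 \<le> r\<close> by (auto simp: b_def)
  ultimately have x'_foot: "x' = x - ((inner w x - b) / (norm w)\<^sup>2) *\<^sub>R w"
    using x'_proj by (simp add: proj_halfspace)
  have incl: "(1 / \<alpha>) *\<^sub>R (x - xbar) - (A1 x + A2 x) \<in> B xbar"
    by (rule resolvent_forward_step_in[OF B \<open>0 < \<alpha>\<close> xbar])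
  show "(norm (x' - z))\<^sup>2 + (norm (x - x'))\<^sup>2 \<le> (norm (x - z))\<^sup>2"
    if "z \<in> zer_sum (\<lambda>x. A1 x + A2 x) B" for z
  proof -
    have "inner w (z - xbar) \<le> r"
      using zer_sum_in_halfspace[OF coco \<open>0 < \<beta>\<close> A2 maximal_monotone_imp_monotone_op[OF B]
          \<open>0 < \<alpha>\<close> \<open>\<alpha> \<le> 4 * \<beta> * \<delta>bar\<close> incl that]
      by (simp add: w_def r_def)
    then have "inner w z \<le> b"
      by (simp add: b_def inner_diff_right)
    then show ?thesis
      unfolding x'_foot by (rule halfspace_foot_pythagoras[OF \<open>w \<noteq> 0\<close> \<open>b < inner w x\<close>])
  qed
  have "norm (x - x') * norm w = inner w (x - xbar) - r"
    unfolding x'_foot halfspace_foot_dist[OF \<open>w \<noteq> 0\<close> \<open>b < inner w x\<close>]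
    by (simp add: b_def inner_diff_right)
  have "inner (\<alpha> *\<^sub>R w) (x - xbar) - \<delta>bar * (norm (x - xbar))\<^sup>2 = \<alpha> * (inner w (x - xbar) - r)"
    using \<open>0 < \<alpha>\<close> by (simp add: r_def algebra_simps)
  also have "\<dots> = norm (\<alpha> *\<^sub>R w) * norm (x - x')"
    using \<open>0 < \<alpha>\<close> \<open>norm (x - x') * norm w = inner w (x - xbar) - r\<close> by (simp add: mult.commute)
  also have "\<alpha> *\<^sub>R w = x - xbar - \<alpha> *\<^sub>R (A2 x - A2 xbar)"
    using \<open>0 < \<alpha>\<close> by (simp add: w_def scaleR_diff_right)
  finally show "inner (x - xbar - \<alpha> *\<^sub>R (A2 x - A2 xbar)) (x - xbar) - \<delta>bar * (norm (x - xbar))\<^sup>2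
      = norm (x - xbar - \<alpha> *\<^sub>R (A2 x - A2 xbar)) * norm (x - x')"
    by simp
qed

lemma Fejer_bounded:
  fixes x :: "nat \<Rightarrow> 'a::real_normed_vector"
  assumes "\<And>k. norm (x (Suc k) - z) \<le> norm (x k - z)"
  shows "bounded (range x)"
proof -
  have "norm (x k - z) \<le> norm (x 0 - z)" for k
  proof (induction k)
    case (Suc k)
    then show ?case
      using assms[of k] by linarith
  qed simp
  then have "range x \<subseteq> cball z (norm (x 0 - z))"
    by (auto simp: dist_norm norm_minus_commute)
  then show ?thesis
    using bounded_cball bounded_subset by blast
qed

lemma Fejer_sq_steps_tendsto_zero:
  fixes x :: "nat \<Rightarrow> 'a::real_normed_vector"
  assumes Fejer: "\<And>k. (norm (x (Suc k) - z))\<^sup>2 + (norm (x k - x (Suc k)))\<^sup>2 \<le> (norm (x k - z))\<^sup>2"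
  shows "(\<lambda>k. norm (x k - x (Suc k))) \<longlonglongrightarrow> 0"
proof -
  define s where "s k = (norm (x k - z))\<^sup>2" for k
  have step: "(norm (x k - x (Suc k)))\<^sup>2 \<le> s k - s (Suc k)" for k
    using Fejer[of k] by (simp add: s_def)
  have "s (Suc k) \<le> s k" for k
    using step[of k] zero_le_power2[of "norm (x k - x (Suc k))"] by linarith
  then have "decseq s"
    by (rule decseq_SucI)
  then obtain L where "s \<longlonglongrightarrow> L"
    using decseq_convergent[of s 0] by (auto simp: s_def)
  then have "(\<lambda>k. s k - s (Suc k)) \<longlonglongrightarrow> L - L"
    by (intro tendsto_diff LIMSEQ_Suc)
  then have "(\<lambda>k. s k - s (Suc k)) \<longlonglongrightarrow> 0"
    by simp
  then have "(\<lambda>k. (norm (x k - x (Suc k)))\<^sup>2) \<longlonglongrightarrow> 0"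
    using step by (intro tendsto_sandwich[OF _ _ tendsto_const \<open>(\<lambda>k. s k - s (Suc k)) \<longlonglongrightarrow> 0\<close>]) auto
  then have "(\<lambda>k. sqrt ((norm (x k - x (Suc k)))\<^sup>2)) \<longlonglongrightarrow> sqrt 0"
    by (rule tendsto_real_sqrt)
  then show ?thesis
    by simp
qed

lemma uniformly_continuous_affine_bound:
  fixes f :: "'a::real_normed_vector \<Rightarrow> 'b::real_normed_vector"
  assumes "uniformly_continuous_on UNIV f"
  obtains C where "\<And>a b. norm (f a - f b) \<le> C * (norm (a - b) + 1)"
proof -
  obtain \<eta> where "0 < \<eta>" and \<eta>: "\<And>x x'. dist x' x < \<eta> \<Longrightarrow> dist (f x') (f x) < 1"
    using assms unfolding uniformly_continuous_on_def by (metis UNIV_I zero_less_one)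
  have "norm (f b - f a) \<le> (1 / \<eta> + 2) * (norm (b - a) + 1)" for a b
  proof -
    define t where "t = norm (b - a) / \<eta>"
    define N where "N = nat \<lceil>t\<rceil> + 1"
    have "0 \<le> t"
      using \<open>0 < \<eta>\<close> by (simp add: t_def)
    then have N: "real N = of_int \<lceil>t\<rceil> + 1"
      by (simp add: N_def)
    have "t < N" "N \<le> t + 2" "(1::real) \<le> N"
      using \<open>0 \<le> t\<close> le_of_int_ceiling[of t] of_int_ceiling_le_add_one[of t] unfolding N by linarith+
    define pt where "pt i = a + (real i / real N) *\<^sub>R (b - a)" for i
    have "norm (pt (Suc i) - pt i) = norm (b - a) / N" for i
      using \<open>(1::real) \<le> N\<close> by (simp add: pt_def scaleR_diff_left[symmetric] diff_divide_distrib[symmetric])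
    also have "\<dots> < \<eta>"
      using \<open>t < N\<close> \<open>0 < \<eta>\<close> \<open>(1::real) \<le> N\<close> by (simp add: t_def field_simps)
    finally have "norm (f (pt (Suc i)) - f (pt i)) < 1" for i
      using \<eta> by (simp add: dist_norm)
    then have ind: "norm (f (pt i) - f a) \<le> i" for i
    proof (induction i)
      case 0
      then show ?case by (simp add: pt_def)
    next
      case (Suc i)
      have "norm (f (pt (Suc i)) - f (pt i)) < 1"
        using Suc.prems .
      then show ?case
        using norm_triangle_ineq[of "f (pt (Suc i)) - f (pt i)" "f (pt i) - f a"] Suc.IH[OF Suc.prems]
        by simp
    qed
    moreover have "pt N = b"
      using \<open>(1::real) \<le> N\<close> by (simp add: pt_def)
    ultimately have "norm (f b - f a) \<le> N"
      using ind[of N] by simp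
    also have "\<dots> \<le> t + 2 + (1 / \<eta> + 2 * norm (b - a))"
    proof -
      have "0 \<le> 1 / \<eta> + 2 * norm (b - a)"
        using \<open>0 < \<eta>\<close> by simp
      then show ?thesis
        using \<open>N \<le> t + 2\<close> by linarith
    qed
    also have "\<dots> = (1 / \<eta> + 2) * (norm (b - a) + 1)"
      by (simp add: t_def algebra_simps)
    finally show ?thesis .
  qed
  then show ?thesis
    using that by blast
qed

lemma tendsto_zero_if_sq_le_affine_mult:
  fixes Q \<rho> d :: "nat \<Rightarrow> real"
  assumes "0 < c" "0 \<le> a" "0 \<le> a0"
    and lower: "\<And>k. c * (\<rho> k)\<^sup>2 \<le> Q k" and upper: "\<And>k. Q k \<le> (a * \<rho> k + a0) * d k"
    and d: "\<And>k. 0 \<le> d k" "d \<longlonglongrightarrow> 0"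
  shows "Q \<longlonglongrightarrow> 0"
proof -
  obtain D where "\<forall>k. norm (d k) \<le> D"
    using convergent_imp_Bseq[OF convergentI[OF d(2)]] by (auto elim: BseqE)
  then have D: "d k \<le> D" for k
    using abs_le_D1 by auto
  define R where "R = max 1 ((a + a0) * D / c)"
  have \<rho>_le: "\<rho> k \<le> R" for k
  proof (cases "\<rho> k \<le> 1")
    case False
    have "c * \<rho> k * \<rho> k \<le> (a * \<rho> k + a0) * d k"
      using lower[of k] upper[of k] by (simp add: power2_eq_square)
    also have "\<dots> \<le> (a * \<rho> k + a0 * \<rho> k) * D"
      using False \<open>0 \<le> a\<close> \<open>0 \<le> a0\<close> D[of k] d(1)[of k] mult_left_mono[of 1 "\<rho> k" a0]
      by (intro mult_mono add_left_mono) auto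
    finally have "\<rho> k * (c * \<rho> k) \<le> \<rho> k * ((a + a0) * D)"
      by (simp add: algebra_simps)
    then have "c * \<rho> k \<le> (a + a0) * D"
      using False by (simp add: mult_le_cancel_left_pos)
    then have "\<rho> k \<le> (a + a0) * D / c"
      using \<open>0 < c\<close> by (simp add: field_simps)
    then show ?thesis
      by (simp add: R_def)
  qed (simp add: R_def)
  have "Q k \<le> (a * R + a0) * d k" for k
    using upper[of k] \<rho>_le[of k] \<open>0 \<le> a\<close> d(1)[of k]
    by (meson add_right_mono mult_left_mono mult_right_mono order_trans)
  moreover have "0 \<le> Q k" for k
    using lower[of k] \<open>0 < c\<close> by (meson mult_nonneg_nonneg order_trans less_imp_le zero_le_power2)
  moreover have "(\<lambda>k. (a * R + a0) * d k) \<longlonglongrightarrow> 0"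
    using tendsto_mult_right_zero[OF d(2)] by simp
  ultimately show ?thesis
    by (intro tendsto_sandwich[OF _ _ tendsto_const \<open>(\<lambda>k. (a * R + a0) * d k) \<longlonglongrightarrow> 0\<close>]) auto
qed

lemma backtracking_step_sizes:
  fixes \<alpha> :: "nat \<Rightarrow> real"
  assumes "0 < \<alpha>0" "0 < \<theta>" "\<theta> \<le> 1"
    and \<alpha>: "\<And>k. \<alpha> k = (if k = 0 then \<alpha>0 else \<alpha> (k - 1)) * \<theta> ^ j k"
  shows "0 < \<alpha> k \<and> \<alpha> k \<le> \<alpha>0"
proof -
  have \<theta>_pow: "0 < \<theta> ^ n" "\<theta> ^ n \<le> 1" for n
    using assms(2,3) by (simp_all add: power_le_one)
  show ?thesis
  proof (induction k)
    case 0
    then show ?case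
      using \<alpha>[of 0] \<theta>_pow[of "j 0"] \<open>0 < \<alpha>0\<close> by (simp add: mult_le_cancel_left1)
  next
    case (Suc k)
    have "\<alpha> (Suc k) = \<alpha> k * \<theta> ^ j (Suc k)"
      using \<alpha>[of "Suc k"] by simp
    moreover have "\<alpha> k * \<theta> ^ j (Suc k) \<le> \<alpha> k"
      using Suc.IH \<theta>_pow[of "j (Suc k)"] by (intro mult_left_le) auto
    moreover have "0 < \<alpha> k * \<theta> ^ j (Suc k)"
      using Suc.IH \<theta>_pow[of "j (Suc k)"] by simp
    ultimately show ?case
      using Suc.IH by linarith
  qed
qed

lemma linesearch_residual_tendsto_zero:
  fixes A2 :: "'a::real_inner \<Rightarrow> 'a" and x xbar :: "nat \<Rightarrow> 'a" and \<alpha> d :: "nat \<Rightarrow> real"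
  assumes "uniformly_continuous_on UNIV A2"
    and \<alpha>: "\<And>k. 0 < \<alpha> k" "\<And>k. \<alpha> k \<le> \<alpha>max"
    and "0 < 1 - \<delta> - \<delta>bar"
    and linesearch: "\<And>k. \<alpha> k * inner (A2 (x k) - A2 (xbar k)) (x k - xbar k) \<le> \<delta> * (norm (x k - xbar k))\<^sup>2"
    and residual: "\<And>k. inner (x k - xbar k - \<alpha> k *\<^sub>R (A2 (x k) - A2 (xbar k))) (x k - xbar k)
                          - \<delta>bar * (norm (x k - xbar k))\<^sup>2
                        = norm (x k - xbar k - \<alpha> k *\<^sub>R (A2 (x k) - A2 (xbar k))) * d k"
    and d: "\<And>k. 0 \<le> d k" "d \<longlonglongrightarrow> 0"
  shows "(\<lambda>k. inner (x k - xbar k - \<alpha> k *\<^sub>R (A2 (x k) - A2 (xbar k))) (x k - xbar k)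
               - \<delta>bar * (norm (x k - xbar k))\<^sup>2) \<longlonglongrightarrow> 0"
proof -
  obtain C where C: "\<And>a b. norm (A2 a - A2 b) \<le> C * (norm (a - b) + 1)"
    using uniformly_continuous_affine_bound[OF assms(1)] by blast
  have "0 \<le> C"
    using C[of 0 0] by simp
  have "0 \<le> \<alpha>max"
    using \<alpha>(1)[of 0] \<alpha>(2)[of 0] by linarith
  define \<rho> where "\<rho> k = norm (x k - xbar k)" for k
  define D where "D k = A2 (x k) - A2 (xbar k)" for k
  have expand: "inner (x k - xbar k - \<alpha> k *\<^sub>R D k) (x k - xbar k) = (\<rho> k)\<^sup>2 - \<alpha> k * inner (D k) (x k - xbar k)"
    for k by (simp add: \<rho>_def inner_diff_left power2_norm_eq_inner)
  show ?thesis
  proof (rule tendsto_zero_if_sq_le_affine_mult)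
    show "(1 - \<delta> - \<delta>bar) * (\<rho> k)\<^sup>2
        \<le> inner (x k - xbar k - \<alpha> k *\<^sub>R (A2 (x k) - A2 (xbar k))) (x k - xbar k) - \<delta>bar * (norm (x k - xbar k))\<^sup>2"
      for k
      using linesearch[of k] expand[of k] by (simp add: D_def \<rho>_def algebra_simps)
    show "inner (x k - xbar k - \<alpha> k *\<^sub>R (A2 (x k) - A2 (xbar k))) (x k - xbar k) - \<delta>bar * (norm (x k - xbar k))\<^sup>2
        \<le> ((1 + \<alpha>max * C) * \<rho> k + \<alpha>max * C) * d k" for k
    proof -
      have "norm (\<alpha> k *\<^sub>R D k) \<le> \<alpha>max * (C * (\<rho> k + 1))"
        using \<alpha>[of k] C[of "x k" "xbar k"] \<open>0 \<le> C\<close>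
        by (auto simp: D_def \<rho>_def intro!: mult_mono)
      then have "norm (x k - xbar k - \<alpha> k *\<^sub>R D k) \<le> (1 + \<alpha>max * C) * \<rho> k + \<alpha>max * C"
        using norm_triangle_ineq4[of "x k - xbar k" "\<alpha> k *\<^sub>R D k"] by (simp add: \<rho>_def algebra_simps)
      then have "norm (x k - xbar k - \<alpha> k *\<^sub>R D k) * d k \<le> ((1 + \<alpha>max * C) * \<rho> k + \<alpha>max * C) * d k"
        using d(1)[of k] by (rule mult_right_mono)
      then show ?thesis
        by (simp only: residual D_def)
    qed
  qed (use \<open>0 < 1 - \<delta> - \<delta>bar\<close> \<open>0 \<le> C\<close> \<open>0 \<le> \<alpha>max\<close> d in auto)
qed

theorem proposition4p7:
  fixes A1 A2 :: "'a::{real_inner, complete_space} \<Rightarrow> 'a"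
    and B :: "'a \<Rightarrow> 'a set"
    and \<beta> \<theta> \<delta> \<delta>bar \<alpha>m1 :: real
    and x xbar :: "nat \<Rightarrow> 'a"
    and \<alpha> :: "nat \<Rightarrow> real"
    and j :: "nat \<Rightarrow> nat"
  assumes \<beta>: "\<beta> > 0" and coco: "cocoercive \<beta> A1"
    and A2_mm: "maximal_monotone (\<lambda>x. {A2 x})"
    and A2_uc: "uniformly_continuous_on UNIV A2"
    and B_mm: "maximal_monotone B"
    and zer_ne: "zer_sum (\<lambda>x. A1 x + A2 x) B \<noteq> {}"
    and \<theta>: "0 < \<theta>" "\<theta> < 1"
    and \<delta>: "0 < \<delta>" "\<delta> < 1"
    and \<delta>bar: "\<delta>bar > 0" "1 - \<delta> - \<delta>bar > 0"
    and \<alpha>m1: "\<alpha>m1 > 0" "\<alpha>m1 \<le> 4 * \<beta> * \<delta>bar"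
    and j_ok: "\<And>k. (let ap = (if k = 0 then \<alpha>m1 else \<alpha> (k - 1));
                        xj = resolvent (ap * \<theta> ^ j k) B
                               (x k - (ap * \<theta> ^ j k) *\<^sub>R (A1 (x k) + A2 (x k)))
                    in ap * \<theta> ^ j k * inner (A2 (x k) - A2 xj) (x k - xj)
                         \<le> \<delta> * (norm (x k - xj))\<^sup>2)"
    and j_least: "\<And>k i. i < j k \<Longrightarrow>
                   (let ap = (if k = 0 then \<alpha>m1 else \<alpha> (k - 1));
                        xj = resolvent (ap * \<theta> ^ i) B
                               (x k - (ap * \<theta> ^ i) *\<^sub>R (A1 (x k) + A2 (x k)))
                    in \<not> (ap * \<theta> ^ i * inner (A2 (x k) - A2 xj) (x k - xj)
                         \<le> \<delta> * (norm (x k - xj))\<^sup>2))"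
    and \<alpha>_def: "\<And>k. \<alpha> k = (if k = 0 then \<alpha>m1 else \<alpha> (k - 1)) * \<theta> ^ j k"
    and xbar_def: "\<And>k. xbar k = resolvent (\<alpha> k) B (x k - \<alpha> k *\<^sub>R (A1 (x k) + A2 (x k)))"
    and x_next: "\<And>k. x (Suc k) = proj
        {z. inner ((1 / \<alpha> k) *\<^sub>R (x k - xbar k) - (A2 (x k) - A2 (xbar k))) (z - xbar k)
              \<le> \<delta>bar / \<alpha> k * (norm (x k - xbar k))\<^sup>2} (x k)"
    and no_stop: "\<And>k. x (Suc k) \<noteq> x k"
  shows "(\<forall>z \<in> zer_sum (\<lambda>x. A1 x + A2 x) B. \<exists>K. \<forall>k \<ge> K. norm (x (Suc k) - z) \<le> norm (x k - z))
       \<and> bounded (range x)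
       \<and> (\<lambda>k. inner (x k - xbar k - \<alpha> k *\<^sub>R (A2 (x k) - A2 (xbar k))) (x k - xbar k)
                - \<delta>bar * (norm (x k - xbar k))\<^sup>2) \<longlonglongrightarrow> 0"
proof -
  have \<alpha>: "0 < \<alpha> k" "\<alpha> k \<le> \<alpha>m1" for k
    using backtracking_step_sizes[OF \<alpha>m1(1) \<theta>(1) less_imp_le[OF \<theta>(2)] \<alpha>_def] by auto
  note step = forward_backward_projection_step[OF coco \<beta> maximal_monotone_imp_monotone_op[OF A2_mm] B_mm
      \<alpha>(1) order_trans[OF \<alpha>(2) \<alpha>m1(2)] less_imp_le[OF \<delta>bar(1)] xbar_def x_next no_stop]
  have Fejer: "norm (x (Suc k) - z) \<le> norm (x k - z)"
    if "z \<in> zer_sum (\<lambda>x. A1 x + A2 x) B" for z k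
  proof (rule power2_le_imp_le)
    show "(norm (x (Suc k) - z))\<^sup>2 \<le> (norm (x k - z))\<^sup>2"
      using step(1)[OF that, of k] zero_le_power2[of "norm (x k - x (Suc k))"] by linarith
  qed simp
  obtain z0 where z0: "z0 \<in> zer_sum (\<lambda>x. A1 x + A2 x) B"
    using zer_ne by blast
  have linesearch: "\<alpha> k * inner (A2 (x k) - A2 (xbar k)) (x k - xbar k) \<le> \<delta> * (norm (x k - xbar k))\<^sup>2" for k
    using j_ok[of k] unfolding Let_def \<alpha>_def[of k, symmetric] xbar_def[of k, symmetric] .
  have "(\<lambda>k. norm (x k - x (Suc k))) \<longlonglongrightarrow> 0"
    by (rule Fejer_sq_steps_tendsto_zero[of x z0]) (rule step(1)[OF z0])
  then have "(\<lambda>k. inner (x k - xbar k - \<alpha> k *\<^sub>R (A2 (x k) - A2 (xbar k))) (x k - xbar k)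
                - \<delta>bar * (norm (x k - xbar k))\<^sup>2) \<longlonglongrightarrow> 0"
    by (rule linesearch_residual_tendsto_zero[OF A2_uc \<alpha> \<delta>bar(2) linesearch step(2) norm_ge_zero])
  moreover have "bounded (range x)"
    by (rule Fejer_bounded[of x z0]) (rule Fejer[OF z0])
  ultimately show ?thesis
    using Fejer by blast
qed

end
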